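(* Let $n,t\geq 3$ be integers. If $t$ is odd, then for all $\mathbf u,\mathbf v\in D_{n,t-2}$ and $\mathbf w\in D^*_{n,t-2}$ the sets $E_1(\mathbf u)$, $E_2(\mathbf v)$, $E_3(\mathbf w)$ are pairwise disjoint. If $t$ is even, then for all $\mathbf u,\mathbf v,\mathbf w\in D^*_{n,t-2}$ the sets $E_1(\mathbf u)$, $E_2(\mathbf v)$, $E_3(\mathbf w)$ and $\{1^{t-2}\alpha1:\alpha\in[n]\}$ are pairwise disjoint. Moreover, for each $i\in\{1,2,3\}$, $E_i(\mathbf u)\cap E_i(\mathbf v)=\emptyset$ whenever $\mathbf u\neq\mathbf v$ are in the domain on which $E_i$ is defined.
   Context: For a positive integer $n$ let $[n]=\{1,\dots,n\}$; vertices of the Sierpiński graph $S(K_n,t)$ are words in $[n]^t$. Write $a^k$ for the word consisting of $k$ copies of the letter $a$, and $D^*_{n,s}=D_{n,s}\setminus\{1^s\}$. The sets $D_{n,t}\subseteq[n]^t$ are defined recursively: $D_{n,1}=\{1\}$, $D_{n,2}=\{11,21,\dots,n1\}$. For $t\geq 3$ and $\mathbf v=v_1\cdots v_{t-2}\in D_{n,t-2}$ put $E_1(\mathbf v)=\{v_1\cdots v_{t-2}\alpha\alpha:\alpha\in[n]\}$, $E_2(\mathbf v)=\{v_1\cdots v_{t-3}\alpha\beta v_{t-2}:\alpha,\beta\in[n]\setminus\{v_{t-2}\}\}$, and, if $\mathbf v$ is not a constant word, let $\ell$ be the largest index in $[t-3]$ with $v_\ell\neq v_{\ell+1}$ and put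 $E_3(\mathbf v)=\{v_1\cdots v_{\ell-1}v_{\ell+1}v_\ell^{\,t-\ell-2}\alpha v_\ell:\alpha\in[n]\setminus\{v_\ell\}\}$. If $t\geq 3$ is odd, $D_{n,t}=E_1(1^{t-2})\cup E_2(1^{t-2})\cup\bigcup_{\mathbf v\in D_{n,t-2}\setminus\{1^{t-2}\}}\big(E_1(\mathbf v)\cup E_2(\mathbf v)\cup E_3(\mathbf v)\big)$. If $t\geq 4$ is even, $D_{n,t}=\{1^{t-2}\alpha1:\alpha\in[n]\}\cup\bigcup_{\mathbf v\in D_{n,t-2}\setminus\{1^{t-2}\}}\big(E_1(\mathbf v)\cup E_2(\mathbf v)\cup E_3(\mathbf v)\big)$. (In this recursion $1^{t-2}\in D_{n,t-2}$ is the only constant word in $D_{n,t-2}$, so $E_3$ is applied only to non-constant words.) Here $E_1,E_2$ are defined on $D_{n,t-2}$ and $E_3$ on $D^*_{n,t-2}$. *)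

theory Defs
  imports Main
begin

text \<open>Words in [n]^t are lists of naturals of length t with letters in {1..n};
  the i-th letter v_i (1-indexed) is v ! (i-1).\<close>

definition E1 :: "nat \<Rightarrow> nat list \<Rightarrow> nat list set" where
  "E1 n v = {v @ [a, a] | a. a \<in> {1..n}}"

definition E2 :: "nat \<Rightarrow> nat list \<Rightarrow> nat list set" where
  "E2 n v = {take (length v - 1) v @ [a, b, last v] | a b.
              a \<in> {1..n} - {last v} \<and> b \<in> {1..n} - {last v}}"

definition lidx :: "nat list \<Rightarrow> nat" where
  "lidx v = Max {l \<in> {1..length v - 1}. v ! (l - 1) \<noteq> v ! l}"

definition E3 :: "nat \<Rightarrow> nat list \<Rightarrow> nat list set" where
  "E3 n v = (let l = lidx v; m = length v in
     {take (l - 1) v @ [v ! l] @ replicate (m - l) (v ! (l - 1)) @ [a, v ! (l - 1)] | a.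
        a \<in> {1..n} - {v ! (l - 1)}})"

fun D :: "nat \<Rightarrow> nat \<Rightarrow> nat list set" where
  "D n 0 = {}"
| "D n (Suc 0) = {[1]}"
| "D n (Suc (Suc 0)) = {[a, 1] | a. a \<in> {1..n}}"
| "D n (Suc (Suc (Suc k))) =
     (let t = k + 3; P = D n (Suc k); c = replicate (Suc k) 1 in
      if odd t then
        E1 n c \<union> E2 n c \<union> (\<Union>v \<in> P - {c}. E1 n v \<union> E2 n v \<union> E3 n v)
      else
        {c @ [a, 1] | a. a \<in> {1..n}} \<union> (\<Union>v \<in> P - {c}. E1 n v \<union> E2 n v \<union> E3 n v))"

definition Dstar :: "nat \<Rightarrow> nat \<Rightarrow> nat list set" where
  "Dstar n s = D n s - {replicate s 1}"

end

theory Submission imports Defs begin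

text \<open>Every word of \<open>D n s\<close> has length \<open>s\<close> and is either \<open>1\<^sup>s\<close> or nonconstant.
  The families are then told apart by their last letters: words of \<open>E1 u\<close> end in \<open>a a\<close>,
  words of \<open>E2 v\<close> in \<open>a b e\<close> with \<open>a, b \<noteq> e\<close>, words of \<open>E3 w\<close> (\<open>w\<close> nonconstant) in \<open>c a c\<close>
  with \<open>a \<noteq> c\<close>, and the words \<open>1\<^sup>s a 1\<close> in \<open>1 a 1\<close>, which meets \<open>E1 u\<close> only for \<open>u = 1\<^sup>s\<close>.
  For injectivity of \<open>E3\<close>: a nonconstant word splits at its last change as \<open>p c d\<^sup>k\<close> with
  \<open>c \<noteq> d\<close>, \<open>k \<ge> 1\<close>, and its \<open>E3\<close>-words are \<open>p d c\<^sup>k a c\<close>; stripping the final block of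
  \<open>c\<close>'s recovers \<open>p\<close>, \<open>d\<close> and \<open>k\<close>.\<close>

definition nonconstant :: "'a list \<Rightarrow> bool" where
  "nonconstant w \<longleftrightarrow> (\<exists>i. Suc i < length w \<and> w ! i \<noteq> w ! Suc i)"

lemma nonconstant_append_left:
  assumes "nonconstant xs"
  shows "nonconstant (xs @ ys)"
proof -
  obtain i where "Suc i < length xs" "xs ! i \<noteq> xs ! Suc i"
    using assms unfolding nonconstant_def by blast
  then show ?thesis
    unfolding nonconstant_def by (intro exI[of _ i]) (simp add: nth_append)
qed

lemma nonconstant_append_right:
  assumes "nonconstant ys"
  shows "nonconstant (xs @ ys)"
proof -
  obtain i where "Suc i < length ys" "ys ! i \<noteq> ys ! Suc i"
    using assms unfolding nonconstant_def by blast
  then show ?thesis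
    unfolding nonconstant_def by (intro exI[of _ "length xs + i"]) (simp add: nth_append)
qed

lemma nonconstant_Cons_Cons: "a \<noteq> b \<Longrightarrow> nonconstant (a # b # ys)"
  unfolding nonconstant_def by (intro exI[of _ 0]) simp

lemma nonconstant_append_Cons_Cons: "a \<noteq> b \<Longrightarrow> nonconstant (xs @ a # b # ys)"
  by (simp add: nonconstant_Cons_Cons nonconstant_append_right)

lemma
  assumes "nonconstant w"
  shows lidx_ge_1: "1 \<le> lidx w"
    and lidx_less_length: "lidx w < length w"
    and nth_lidx_neq: "w ! (lidx w - 1) \<noteq> w ! lidx w"
    and nth_after_lidx: "\<And>j. lidx w < j \<Longrightarrow> j < length w \<Longrightarrow> w ! (j - 1) = w ! j"
proof -
  define L where "L = {l \<in> {1..length w - 1}. w ! (l - 1) \<noteq> w ! l}"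
  obtain i where i: "Suc i < length w" "w ! i \<noteq> w ! Suc i"
    using assms unfolding nonconstant_def by blast
  have fin: "finite L" and "Suc i \<in> L"
    using i unfolding L_def by auto
  then have "lidx w \<in> L" and max: "\<And>j. j \<in> L \<Longrightarrow> j \<le> lidx w"
    unfolding lidx_def L_def[symmetric] by (auto intro: Max_in Max_ge)
  then show "1 \<le> lidx w" "lidx w < length w" "w ! (lidx w - 1) \<noteq> w ! lidx w"
    unfolding L_def by auto
  show "w ! (j - 1) = w ! j" if "lidx w < j" "j < length w" for j
    using that max[of j] unfolding L_def by fastforce
qed

lemma nth_from_lidx:
  assumes "nonconstant w" "lidx w \<le> j" "j < length w"
  shows "w ! j = w ! lidx w"
  using assms(2,3)
proof (induction j rule: dec_induct)
  case (step j)
  then show ?case using nth_after_lidx[OF assms(1), of "Suc j"] by simp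
qed simp

lemma nonconstant_decomp:
  assumes "nonconstant w"
  shows "w = take (lidx w - 1) w @ w ! (lidx w - 1) # replicate (length w - lidx w) (w ! lidx w)"
    (is "w = ?r")
proof (rule nth_equalityI)
  have l: "1 \<le> lidx w" "lidx w < length w"
    using lidx_ge_1 lidx_less_length assms by blast+
  then show "length w = length ?r" by simp
  show "w ! i = ?r ! i" if "i < length w" for i
    using l that nth_from_lidx[OF assms, of i]
    by (cases "i < lidx w - 1"; cases "i = lidx w - 1") (auto simp: nth_append)
qed

lemma E1_memE:
  assumes "x \<in> E1 n v"
  obtains a where "x = v @ [a, a]"
  using assms unfolding E1_def by blast

lemma E2_memE:
  assumes "x \<in> E2 n v"
  obtains a b where "x = take (length v - 1) v @ [a, b, last v]" "a \<noteq> last v" "b \<noteq> last v"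
  using assms unfolding E2_def by blast

lemma E3_mem:
  "x \<in> E3 n w \<longleftrightarrow> (\<exists>a \<in> {1..n} - {w ! (lidx w - 1)}.
     x = take (lidx w - 1) w @ w ! lidx w # replicate (length w - lidx w) (w ! (lidx w - 1))
         @ [a, w ! (lidx w - 1)])"
  unfolding E3_def Let_def by auto

lemma E3_memE:
  assumes "nonconstant w" "x \<in> E3 n w"
  obtains p c d k a where "w = p @ c # replicate (Suc k) d" "x = p @ d # replicate (Suc k) c @ [a, c]"
    "c \<noteq> d" "a \<noteq> c"
proof -
  let ?p = "take (lidx w - 1) w" and ?c = "w ! (lidx w - 1)" and ?d = "w ! lidx w"
  define k where "k = length w - lidx w - 1"
  have k: "length w - lidx w = Suc k"
    using lidx_less_length[OF assms(1)] by (simp add: k_def)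
  from assms(2) obtain a where "x = ?p @ ?d # replicate (Suc k) ?c @ [a, ?c]" "a \<noteq> ?c"
    unfolding E3_mem k by blast
  moreover have "w = ?p @ ?c # replicate (Suc k) ?d"
    using nonconstant_decomp[OF assms(1)] unfolding k .
  ultimately show thesis
    using that nth_lidx_neq[OF assms(1)] by blast
qed

lemma E3_memE_suffix:
  assumes "nonconstant w" "x \<in> E3 n w"
  obtains q c a where "x = q @ [c, a, c]" "a \<noteq> c"
proof -
  obtain p c d k a where "x = p @ d # replicate (Suc k) c @ [a, c]" "a \<noteq> c"
    using E3_memE[OF assms] by metis
  moreover have "p @ d # replicate (Suc k) c @ [a, c] = (p @ d # replicate k c) @ [c, a, c]"
    by (simp add: replicate_app_Cons_same)
  ultimately show thesis using that by metis
qed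

lemma length_E1: "x \<in> E1 n v \<Longrightarrow> length x = length v + 2"
  by (auto elim: E1_memE)

lemma length_E2: "v \<noteq> [] \<Longrightarrow> x \<in> E2 n v \<Longrightarrow> length x = length v + 2"
  by (auto elim: E2_memE)

lemma length_E3: "nonconstant w \<Longrightarrow> x \<in> E3 n w \<Longrightarrow> length x = length w + 2"
  using lidx_ge_1[of w] lidx_less_length[of w] by (auto simp: E3_mem)

lemma nonconstant_E1: "nonconstant v \<Longrightarrow> x \<in> E1 n v \<Longrightarrow> nonconstant x"
  by (auto elim: E1_memE intro: nonconstant_append_left)

lemma nonconstant_E2:
  assumes "x \<in> E2 n v"
  shows "nonconstant x"
proof -
  obtain a b where x: "x = (take (length v - 1) v @ [a]) @ [b, last v]" "b \<noteq> last v"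
    using assms by (rule E2_memE) simp
  show ?thesis unfolding x(1) using x(2) by (rule nonconstant_append_Cons_Cons)
qed

lemma nonconstant_E3:
  assumes "x \<in> E3 n w"
  shows "nonconstant x"
proof -
  let ?l = "lidx w"
  obtain a where a: "a \<noteq> w ! (?l - 1)"
    "x = (take (?l - 1) w @ w ! ?l # replicate (length w - ?l) (w ! (?l - 1))) @ [a, w ! (?l - 1)]"
    using assms unfolding E3_mem by auto
  show ?thesis unfolding a(2) using a(1) by (rule nonconstant_append_Cons_Cons)
qed

lemma replicate_one_append_pair:
  assumes "0 < s"
  shows "replicate s 1 @ [a, b] = replicate (s + 2) 1 \<or> nonconstant (replicate s 1 @ [a, b])"
proof (cases "a = 1")
  case True
  then show ?thesis using nonconstant_append_Cons_Cons[of a b "replicate s 1" "[]"]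
    by (cases "b = 1") (auto simp: numeral_2_eq_2 replicate_append_same[symmetric])
next
  case False
  have "replicate s 1 @ [a, b] = replicate (s - 1) 1 @ 1 # a # [b]"
    using assms by (cases s) (simp_all add: replicate_app_Cons_same[symmetric])
  then show ?thesis using False nonconstant_append_Cons_Cons[of 1 a] by metis
qed

lemma D_length_shape: "x \<in> D n s \<Longrightarrow> length x = s \<and> (x = replicate s 1 \<or> nonconstant x)"
proof (induction n s arbitrary: x rule: D.induct)
  case (3 n)
  then show ?case by (auto simp: numeral_2_eq_2 intro: nonconstant_Cons_Cons)
next
  case (4 n k)
  let ?c = "replicate (Suc k) (1::nat)"
  let ?S = "{?c @ [a, 1] | a. a \<in> {1..n}}"
  have step: "length x = k + 3 \<and> (x = replicate (k + 3) 1 \<or> nonconstant x)"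
    if "v \<in> D n (Suc k) - {?c}" "x \<in> E1 n v \<union> E2 n v \<union> E3 n v" for v x
  proof -
    have "length v = Suc k" "nonconstant v" using that(1) "4.IH" by auto
    moreover then have "v \<noteq> []" by auto
    ultimately show ?thesis using that(2)
      by (auto simp: length_E1 length_E2 length_E3 nonconstant_E1 nonconstant_E2 nonconstant_E3)
  qed
  have start: "length x = k + 3 \<and> (x = replicate (k + 3) 1 \<or> nonconstant x)"
    if x: "x \<in> E1 n ?c \<union> E2 n ?c \<union> ?S" for x
  proof -
    consider a where "x = ?c @ [a, a]" | "x \<in> E2 n ?c" | a where "x = ?c @ [a, 1]"
      using x by (auto elim: E1_memE)
    then show ?thesis
    proof cases
      case (1 a)
      then show ?thesis using replicate_one_append_pair[of "Suc k" a a] by (simp add: numeral_eq_Suc)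
    next
      case 2
      then show ?thesis using length_E2[of ?c] nonconstant_E2 by simp
    next
      case (3 a)
      then show ?thesis using replicate_one_append_pair[of "Suc k" a 1] by (simp add: numeral_eq_Suc)
    qed
  qed
  have "x \<in> E1 n ?c \<union> E2 n ?c \<union> ?S \<union> (\<Union>v \<in> D n (Suc k) - {?c}. E1 n v \<union> E2 n v \<union> E3 n v)"
    using "4.prems" by (auto simp: Let_def split: if_splits)
  then have "length x = k + 3 \<and> (x = replicate (k + 3) 1 \<or> nonconstant x)"
    using step start by blast
  then show ?case by (simp add: numeral_eq_Suc)
qed auto

lemma Dstar_nonconstant: "w \<in> Dstar n s \<Longrightarrow> nonconstant w"
  using D_length_shape unfolding Dstar_def by blast

lemma append_Cons_replicate_cancel:
  assumes "xs @ d # replicate k c = ys @ d' # replicate k' c" "d \<noteq> c" "d' \<noteq> c"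
  shows "xs = ys \<and> d = d' \<and> k = k'"
proof -
  have "replicate k c @ d # rev xs = replicate k' c @ d' # rev ys"
    using arg_cong[OF assms(1), of rev] by simp
  then show ?thesis
    using assms(2,3)
  proof (induction k arbitrary: k')
    case 0
    then show ?case by (cases k') auto
  next
    case (Suc k)
    then show ?case by (cases k') auto
  qed
qed

lemma E1_Int_E2: "E1 n u \<inter> E2 n v = {}"
proof -
  have False if "u @ [a, a] = take (length v - 1) v @ [a', b, last v]" "b \<noteq> last v" for a a' b
    using arg_cong[OF that(1), of rev] that(2) by simp
  then show ?thesis by (blast elim: E1_memE E2_memE)
qed

lemma E1_Int_E3:
  assumes "nonconstant w"
  shows "E1 n u \<inter> E3 n w = {}"
proof -
  have False if E1: "x \<in> E1 n u" and E3: "x \<in> E3 n w" for x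
  proof -
    obtain a where "rev x = a # a # rev u"
      using E1 by (rule E1_memE) simp
    moreover obtain q c a' where "x = q @ [c, a', c]" "a' \<noteq> c"
      using E3_memE_suffix[OF assms E3] by metis
    ultimately show False by simp
  qed
  then show ?thesis by blast
qed

lemma E2_Int_E3:
  assumes "nonconstant w"
  shows "E2 n v \<inter> E3 n w = {}"
proof -
  have False if E2: "x \<in> E2 n v" and E3: "x \<in> E3 n w" for x
  proof -
    obtain a b where "rev x = last v # b # a # rev (take (length v - 1) v)" "a \<noteq> last v"
      using E2 by (rule E2_memE) simp
    moreover obtain q c a' where "x = q @ [c, a', c]"
      using E3_memE_suffix[OF assms E3] by metis
    ultimately show False by simp
  qed
  then show ?thesis by blast
qed

lemma E1_Int_replicate_one_pairs:
  assumes "u \<noteq> replicate m 1"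
  shows "E1 n u \<inter> {replicate m 1 @ [a, 1] | a. a \<in> {1..n}} = {}"
proof -
  have False if E1: "x \<in> E1 n u" and S: "x = replicate m 1 @ [b, 1]" for x b
  proof -
    obtain a where "x = u @ [a, a]"
      using E1 by (rule E1_memE)
    then have "rev u = replicate m 1"
      using arg_cong[OF S, of rev] by simp
    then show False
      using assms by (metis rev_replicate rev_rev_ident)
  qed
  then show ?thesis by blast
qed

lemma E2_Int_replicate_one_pairs:
  assumes "0 < m"
  shows "E2 n v \<inter> {replicate m 1 @ [a, 1] | a. a \<in> {1..n}} = {}"
proof -
  have False if E2: "x \<in> E2 n v" and S: "x = replicate m 1 @ [c, 1]" for x c
  proof -
    obtain a b where "x = take (length v - 1) v @ [a, b, last v]" "a \<noteq> last v"
      using E2 by (rule E2_memE)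
    then show False
      using arg_cong[OF S, of rev] assms by (cases m) (simp_all add: replicate_append_same)
  qed
  then show ?thesis by blast
qed

lemma E3_Int_replicate_one_pairs:
  assumes "nonconstant w"
  shows "E3 n w \<inter> {replicate m 1 @ [a, 1] | a. a \<in> {1..n}} = {}"
proof -
  have False if E3: "x \<in> E3 n w" and S: "x = replicate m 1 @ [b, 1]" for x b
  proof -
    obtain p c d k a where x: "x = p @ d # replicate (Suc k) c @ [a, c]" "c \<noteq> d"
      using E3_memE[OF assms E3] by metis
    then have "c = 1" and "p @ d # replicate (Suc k) c = replicate m 1"
      using S by auto
    then have "d \<in> set (replicate m 1)" by (metis in_set_conv_decomp)
    with x(2) \<open>c = 1\<close> show False by simp
  qed
  then show ?thesis by blast
qed

lemma E1_Int_E1: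
  assumes "u \<noteq> v"
  shows "E1 n u \<inter> E1 n v = {}"
proof -
  have False if xu: "x \<in> E1 n u" and xv: "x \<in> E1 n v" for x
  proof -
    obtain a where "rev x = a # a # rev u"
      using xu by (rule E1_memE) simp
    moreover obtain b where "rev x = b # b # rev v"
      using xv by (rule E1_memE) simp
    ultimately show False using assms by simp
  qed
  then show ?thesis by blast
qed

lemma E2_Int_E2:
  assumes "u \<noteq> v" "u \<noteq> []" "v \<noteq> []"
  shows "E2 n u \<inter> E2 n v = {}"
proof -
  have False if xu: "x \<in> E2 n u" and xv: "x \<in> E2 n v" for x
  proof -
    obtain a b where "rev x = last u # b # a # rev (butlast u)"
      using xu by (rule E2_memE) (simp add: butlast_conv_take)
    moreover obtain a' b' where "rev x = last v # b' # a' # rev (butlast v)"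
      using xv by (rule E2_memE) (simp add: butlast_conv_take)
    ultimately have "butlast u = butlast v" "last u = last v" by simp_all
    with assms show False by (metis append_butlast_last_id)
  qed
  then show ?thesis by blast
qed

lemma E3_Int_E3:
  assumes "u \<noteq> v" "nonconstant u" "nonconstant v"
  shows "E3 n u \<inter> E3 n v = {}"
proof -
  have "u = v" if xu: "x \<in> E3 n u" and xv: "x \<in> E3 n v" for x
  proof -
    obtain p c d k a where u: "u = p @ c # replicate (Suc k) d"
      and x: "x = p @ d # replicate (Suc k) c @ [a, c]" and "c \<noteq> d"
      using E3_memE[OF assms(2) xu] .
    obtain p' c' d' k' a' where v: "v = p' @ c' # replicate (Suc k') d'"
      and x': "x = p' @ d' # replicate (Suc k') c' @ [a', c']" and "c' \<noteq> d'"
      using E3_memE[OF assms(3) xv] .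
    have "(p @ d # replicate (Suc k) c) @ [a, c] = (p' @ d' # replicate (Suc k') c') @ [a', c']"
      by (simp only: append_assoc append_Cons flip: x x')
    then have "p @ d # replicate (Suc k) c = p' @ d' # replicate (Suc k') c' \<and> [a, c] = [a', c']"
      by (rule append_eq_append_conv[THEN iffD1, rotated]) simp
    then have prefix: "p @ d # replicate (Suc k) c = p' @ d' # replicate (Suc k') c'"
      and "[a, c] = [a', c']"
      by blast+
    then have "c = c'" by simp
    with prefix \<open>c \<noteq> d\<close> \<open>c' \<noteq> d'\<close> have "p = p' \<and> d = d' \<and> Suc k = Suc k'"
      using append_Cons_replicate_cancel[of p d "Suc k" c p' d' "Suc k'"] by simp
    with u v \<open>c = c'\<close> show "u = v" by simp
  qed
  with assms(1) show ?thesis by blast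
qed

theorem lemma2p3:
  fixes n t :: nat
  assumes "n \<ge> 3" and "t \<ge> 3"
  shows "(odd t \<longrightarrow>
            (\<forall>u \<in> D n (t - 2). \<forall>v \<in> D n (t - 2). \<forall>w \<in> Dstar n (t - 2).
               E1 n u \<inter> E2 n v = {} \<and> E1 n u \<inter> E3 n w = {} \<and> E2 n v \<inter> E3 n w = {}))
       \<and> (even t \<longrightarrow>
            (\<forall>u \<in> Dstar n (t - 2). \<forall>v \<in> Dstar n (t - 2). \<forall>w \<in> Dstar n (t - 2).
               let S = {replicate (t - 2) 1 @ [a, 1] | a. a \<in> {1..n}} in
               E1 n u \<inter> E2 n v = {} \<and> E1 n u \<inter> E3 n w = {} \<and> E2 n v \<inter> E3 n w = {}
               \<and> E1 n u \<inter> S = {} \<and> E2 n v \<inter> S = {} \<and> E3 n w \<inter> S = {}))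
       \<and> (\<forall>u \<in> D n (t - 2). \<forall>v \<in> D n (t - 2). u \<noteq> v \<longrightarrow> E1 n u \<inter> E1 n v = {})
       \<and> (\<forall>u \<in> D n (t - 2). \<forall>v \<in> D n (t - 2). u \<noteq> v \<longrightarrow> E2 n u \<inter> E2 n v = {})
       \<and> (\<forall>u \<in> Dstar n (t - 2). \<forall>v \<in> Dstar n (t - 2). u \<noteq> v \<longrightarrow> E3 n u \<inter> E3 n v = {})"
proof -
  have "0 < t - 2" using assms(2) by simp
  then have nonempty: "u \<noteq> []" if "u \<in> D n (t - 2)" for u
    using that D_length_shape by fastforce
  have Dstar: "u \<in> D n (t - 2)" "u \<noteq> replicate (t - 2) 1" "nonconstant u"
    if "u \<in> Dstar n (t - 2)" for u
    using that Dstar_nonconstant unfolding Dstar_def by auto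
  show ?thesis
    unfolding Let_def
    using E1_Int_E2 E1_Int_E3 E2_Int_E3 E1_Int_E1 E2_Int_E2 E3_Int_E3 nonempty Dstar
      E1_Int_replicate_one_pairs E2_Int_replicate_one_pairs[OF \<open>0 < t - 2\<close>]
      E3_Int_replicate_one_pairs
    by simp
qed

end
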